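(* Let $q\ge1$, $\lambda$ a primitive $q$th root of unity, $g(z)=\lambda z+O(z^2)$ holomorphic near $0$ with $f:=g^{\circ q}$ of the form $f(z)=z+z^{q+1}+bz^{2q+1}+O(z^{2q+2})$, and $0<r_0<1$ such that $f$ is univalent in a neighborhood of $\overline{\mathbb D}(0,r_0)$, $0$ is its only fixed point in $\overline{\mathbb D}(0,r_0)$ and $\operatorname{Re}(f')>0$ there. Let $g_n(z)=\lambda_nz+O(z^2)$, $|\lambda_n|\ne1$, with $f_n:=g_n^{\circ q}$ holomorphic near $\overline{\mathbb D}(0,r_0)$ and $f_n\to f$ uniformly on $\overline{\mathbb D}(0,r_0)$. Let $0<r_1<r_0/2$ be such that $\overline{\mathbb D}(0,r_1)$ is mapped univalently into $\mathbb D(0,r_0)$ by $f$ and $f^{-1}$ and $\sup_{|z|\le r_1}|f_n(z)-z|\le r_1/2$ for all large $n$. Let $\omega,\omega_n$ be the Buff forms of $f,f_n$, and for $0\le t\le1$ let $$u_t(z)=-t+\int_{[z,(1-t)z+tf(z)]}\omega,\qquad u_{n,t}(z)=-t+\int_{[z,(1-t)z+tf_n(z)]}\omega_n,$$ regarded as holomorphic functions on a neighborhood of $\overline{\mathbb D}(0,r_1)$ (extended holomorphically across the fixed points). Then for every $\epsilon>0$ there is $N\ge1$ such that $|u_{n,t}(z)-u_t(z)|<\epsilon t$ for all $z\in\overline{\mathbb D}(0,r_1)$, $0<t\le1$ and $n\ge N$.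
   Context: $\operatorname{Log}$ is the principal branch of the logarithm; the Buff form of a holomorphic $h$ is $\omega_h=\frac{h'(z)-1}{(h(z)-z)\operatorname{Log}h'(z)}\,dz$ (factor $(h'-1)/\operatorname{Log}h'$ read as $1$ where $h'=1$), meromorphic with poles at fixed points of $h$. For non-fixed $z$ the segments of integration avoid the fixed points, and the functions $u_t,u_{n,t}$ extend holomorphically across the fixed points of $f$, resp. $f_n$. *)

theory Defs
  imports "HOL-Complex_Analysis.Complex_Analysis"
begin

text \<open>Coefficient of the Buff form of h:
  omega_h = (h'(z) - 1) / ((h(z) - z) Log h'(z)) dz, where the factor
  (h' - 1)/Log h' is read as 1 where h' = 1. Ln is the principal logarithm.\<close>
definition buff_coef :: "(complex \<Rightarrow> complex) \<Rightarrow> complex \<Rightarrow> complex" where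
  "buff_coef h z =
     (if deriv h z = 1 then 1 else (deriv h z - 1) / Ln (deriv h z)) / (h z - z)"

definition buff_int :: "(complex \<Rightarrow> complex) \<Rightarrow> complex \<Rightarrow> complex \<Rightarrow> complex" where
  "buff_int h a b = contour_integral (linepath a b) (buff_coef h)"

end

(*
  On the annulus r1/2 <= |w| <= 3 r1/2 the map f has no fixed points and Re f' > 0. Cauchy
  estimates upgrade the uniform convergence f_n -> f to f_n' -> f' there, so the coefficients
  (h' - 1) / ((h - z) Log h') of the Buff forms of the f_n converge uniformly on the annulus to
  that of f. For |z| = r1 both integration segments [z, (1 - t) z + t f_n(z)] and
  [z, (1 - t) z + t f(z)] lie in the annulus, because |f_n(z) - z| and |f(z) - z| are at most r1/2;
  parametrised over [0,1], the two integrands differ by t times a uniformly small quantity, so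
  |u_{n,t}(z) - u_t(z)| <= t eps/2 on the circle |z| = r1. As u_{n,t} - u_t is holomorphic near the
  closed disc, the maximum modulus principle carries the bound inside.
*)
theory Submission
  imports Defs
begin

lemma holomorphic_on_funpow:
  assumes "g holomorphic_on U" "\<forall>k<n. (g ^^ k) ` W \<subseteq> U"
  shows "(g ^^ n) holomorphic_on W"
  using assms(2)
proof (induction n)
  case 0
  show ?case
    by simp
next
  case (Suc n)
  then have "(g \<circ> g ^^ n) holomorphic_on W"
    by (intro holomorphic_on_compose_gen[OF _ assms(1)]) auto
  then show ?case
    by (simp add: o_def)
qed

lemma norm_deriv_le_Cauchy:
  assumes "h holomorphic_on ball w \<delta>" "continuous_on (cball w \<delta>) h" "0 < \<delta>"
    and "\<And>x. x \<in> sphere w \<delta> \<Longrightarrow> norm (h x) \<le> B"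
  shows "norm (deriv h w) \<le> B / \<delta>"
  using Cauchy_inequality[of h w \<delta> B 1] assms by (simp add: dist_norm)

lemma uniform_limit_deriv:
  fixes fs :: "'i \<Rightarrow> complex \<Rightarrow> complex"
  assumes lim: "uniform_limit (cball a R) fs f F"
    and hol_fs: "\<And>n. fs n holomorphic_on ball a R" "\<And>n. continuous_on (cball a R) (fs n)"
    and hol_f: "f holomorphic_on ball a R" "continuous_on (cball a R) f"
    and "\<rho> < R"
  shows "uniform_limit (cball a \<rho>) (\<lambda>n. deriv (fs n)) (deriv f) F"
proof (rule uniform_limitI)
  fix e :: real
  assume "e > 0"
  define \<delta> where "\<delta> = R - \<rho>"
  have "\<delta> > 0"
    using \<open>\<rho> < R\<close> by (simp add: \<delta>_def)
  have "\<forall>\<^sub>F n in F. \<forall>x\<in>cball a R. dist (fs n x) (f x) < e * \<delta> / 2"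
    using uniform_limitD[OF lim, of "e * \<delta> / 2"] \<open>e > 0\<close> \<open>\<delta> > 0\<close> by simp
  then show "\<forall>\<^sub>F n in F. \<forall>w\<in>cball a \<rho>. dist (deriv (fs n) w) (deriv f w) < e"
  proof (rule eventually_mono, intro ballI)
    fix n w
    assume close: "\<forall>x\<in>cball a R. dist (fs n x) (f x) < e * \<delta> / 2" and "w \<in> cball a \<rho>"
    then have sub: "cball w \<delta> \<subseteq> cball a R" "ball w \<delta> \<subseteq> ball a R"
      by (simp_all add: \<delta>_def cball_subset_cball_iff ball_subset_ball_iff dist_commute)
    have "norm (deriv (\<lambda>z. fs n z - f z) w) \<le> (e * \<delta> / 2) / \<delta>"
    proof (rule norm_deriv_le_Cauchy[OF _ _ \<open>\<delta> > 0\<close>])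
      show "(\<lambda>z. fs n z - f z) holomorphic_on ball w \<delta>"
        by (intro holomorphic_intros holomorphic_on_subset[OF hol_fs(1)] holomorphic_on_subset[OF hol_f(1)] sub)
      show "continuous_on (cball w \<delta>) (\<lambda>z. fs n z - f z)"
        by (intro continuous_intros continuous_on_subset[OF hol_fs(2)] continuous_on_subset[OF hol_f(2)] sub)
      show "norm (fs n x - f x) \<le> e * \<delta> / 2" if "x \<in> sphere w \<delta>" for x
        using close sub that by (force simp: dist_norm)
    qed
    moreover have "w \<in> ball a R"
      using sub(2) \<open>\<delta> > 0\<close> centre_in_ball by blast
    then have "deriv (\<lambda>z. fs n z - f z) w = deriv (fs n) w - deriv f w"
      by (intro deriv_diff holomorphic_on_imp_differentiable_at[OF hol_fs(1)]
          holomorphic_on_imp_differentiable_at[OF hol_f(1)]) auto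
    ultimately show "dist (deriv (fs n) w) (deriv f w) < e"
      using \<open>e > 0\<close> \<open>\<delta> > 0\<close> by (simp add: dist_norm)
  qed
qed

lemma uniform_limit_deriv_ball:
  fixes fs :: "'i \<Rightarrow> complex \<Rightarrow> complex"
  assumes lim: "uniform_limit (ball a R) fs f F"
    and hol_fs: "\<And>n. fs n holomorphic_on ball a R" and hol_f: "f holomorphic_on ball a R"
    and "\<rho> < R"
  shows "uniform_limit (cball a \<rho>) (\<lambda>n. deriv (fs n)) (deriv f) F"
proof (rule uniform_limit_deriv[where R = "(\<rho> + R) / 2"])
  have sub: "ball a ((\<rho> + R) / 2) \<subseteq> ball a R" "cball a ((\<rho> + R) / 2) \<subseteq> ball a R"
    using \<open>\<rho> < R\<close> by auto
  show "uniform_limit (cball a ((\<rho> + R) / 2)) fs f F"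
    using lim sub(2) by (rule uniform_limit_on_subset)
  show "fs n holomorphic_on ball a ((\<rho> + R) / 2)" "continuous_on (cball a ((\<rho> + R) / 2)) (fs n)" for n
    using hol_fs[of n] sub by (auto intro: holomorphic_on_imp_continuous_on)
  show "f holomorphic_on ball a ((\<rho> + R) / 2)" "continuous_on (cball a ((\<rho> + R) / 2)) f"
    using hol_f sub by (auto intro: holomorphic_on_imp_continuous_on)
  show "\<rho> < (\<rho> + R) / 2"
    using \<open>\<rho> < R\<close> by simp
qed

lemma eventually_uniform_limit_in_open:
  assumes lim: "uniform_limit K fs f F"
    and "compact (f ` K)" "open T" "f ` K \<subseteq> T"
  shows "\<forall>\<^sub>F n in F. \<forall>x\<in>K. fs n x \<in> T"
proof -
  obtain \<epsilon> where "\<epsilon> > 0" and \<epsilon>: "\<And>y. y \<in> f ` K \<Longrightarrow> ball y \<epsilon> \<subseteq> T"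
    using Heine_Borel_lemma[of "f ` K" "{T}"] assms by auto
  show ?thesis
    using uniform_limitD[OF lim \<open>\<epsilon> > 0\<close>]
    by (elim eventually_mono) (use \<epsilon> in \<open>fastforce simp: dist_commute\<close>)
qed

lemma uniform_limit_compose_continuous_on_open:
  fixes fs :: "'i \<Rightarrow> 'a \<Rightarrow> 'b::euclidean_space"
  assumes lim: "uniform_limit K fs f F"
    and "compact (f ` K)" "open T" "f ` K \<subseteq> T" "continuous_on T \<phi>"
  shows "uniform_limit K (\<lambda>n x. \<phi> (fs n x)) (\<lambda>x. \<phi> (f x)) F"
proof -
  obtain \<epsilon> where "\<epsilon> > 0" and \<epsilon>: "\<And>y. y \<in> f ` K \<Longrightarrow> ball y \<epsilon> \<subseteq> T"
    using Heine_Borel_lemma[of "f ` K" "{T}"] assms by auto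
  define C where "C = {y + v | y v. y \<in> f ` K \<and> v \<in> cball 0 (\<epsilon> / 2)}"
  have "compact C"
    unfolding C_def using assms by (intro compact_sums) auto
  moreover have "C \<subseteq> T"
    using \<epsilon> \<open>\<epsilon> > 0\<close> by (force simp: C_def dist_norm)
  ultimately have "uniformly_continuous_on C \<phi>"
    using assms by (intro compact_uniformly_continuous) (auto elim: continuous_on_subset)
  moreover have "f ` K \<subseteq> C"
    using \<open>\<epsilon> > 0\<close> by (force simp: C_def)
  moreover have "\<forall>\<^sub>F n in F. \<forall>x\<in>K. dist (fs n x) (f x) < \<epsilon> / 2"
    using uniform_limitD[OF lim, of "\<epsilon> / 2"] \<open>\<epsilon> > 0\<close> by simp
  then have "\<forall>\<^sub>F n in F. fs n ` K \<subseteq> C"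
  proof (rule eventually_mono, safe)
    fix n x
    assume "\<forall>x\<in>K. dist (fs n x) (f x) < \<epsilon> / 2" "x \<in> K"
    then have "fs n x = f x + (fs n x - f x)" "f x \<in> f ` K" "fs n x - f x \<in> cball 0 (\<epsilon> / 2)"
      by (auto simp: dist_norm norm_minus_commute)
    then show "fs n x \<in> C"
      unfolding C_def by blast
  qed
  ultimately show ?thesis
    using uniform_limit_compose[OF lim] by (simp add: o_def)
qed

lemma uniform_limit_compose_uniform_limit:
  fixes cs :: "'i \<Rightarrow> 'b::metric_space \<Rightarrow> 'c::metric_space"
  assumes lim_cs: "uniform_limit K cs c F" and "uniformly_continuous_on K c"
    and lim_ws: "uniform_limit X ws w F" and "w ` X \<subseteq> K" and ws_K: "\<forall>\<^sub>F n in F. ws n ` X \<subseteq> K"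
  shows "uniform_limit X (\<lambda>n x. cs n (ws n x)) (\<lambda>x. c (w x)) F"
proof (rule uniform_limitI)
  fix e :: real
  assume "e > 0"
  have "uniform_limit X (\<lambda>n x. c (ws n x)) (c \<circ> w) F"
    using assms by (intro uniform_limit_compose)
  then have "\<forall>\<^sub>F n in F. \<forall>x\<in>X. dist (c (ws n x)) (c (w x)) < e / 2"
    using \<open>e > 0\<close> by (auto dest: uniform_limitD[of _ _ _ _ "e / 2"])
  moreover have "\<forall>\<^sub>F n in F. \<forall>y\<in>K. dist (cs n y) (c y) < e / 2"
    using uniform_limitD[OF lim_cs, of "e / 2"] \<open>e > 0\<close> by simp
  ultimately show "\<forall>\<^sub>F n in F. \<forall>x\<in>X. dist (cs n (ws n x)) (c (w x)) < e"
    using ws_K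
  proof eventually_elim
    case (elim n)
    show ?case
    proof
      fix x
      assume "x \<in> X"
      then have "dist (cs n (ws n x)) (c (ws n x)) < e / 2" "dist (c (ws n x)) (c (w x)) < e / 2"
        using elim by auto
      then show "dist (cs n (ws n x)) (c (w x)) < e"
        using dist_triangle[of "cs n (ws n x)" "c (w x)" "c (ws n x)"] by linarith
    qed
  qed
qed

lemma norm_diff_le_of_uniform_limit:
  fixes fs :: "nat \<Rightarrow> 'a \<Rightarrow> 'b::real_normed_vector"
  assumes "uniform_limit S fs f sequentially" "\<forall>\<^sub>F n in sequentially. \<forall>x\<in>S. norm (fs n x - g x) \<le> c"
    and "x \<in> S"
  shows "norm (f x - g x) \<le> c"
proof (rule Lim_norm_ubound)
  show "((\<lambda>n. fs n x - g x) \<longlongrightarrow> f x - g x) sequentially"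
    using assms by (intro tendsto_intros tendsto_uniform_limitI)
qed (use assms in \<open>auto elim: eventually_mono\<close>)

lemma uniform_limit_segment_integrand:
  fixes cs ds :: "'i \<Rightarrow> complex \<Rightarrow> complex"
  assumes lim_cs: "uniform_limit K cs c F" and "compact K" "continuous_on K c"
    and lim_ds: "uniform_limit Z ds d F" and "bounded (d ` Z)"
    and d_K: "\<And>z \<sigma>. z \<in> Z \<Longrightarrow> \<sigma> \<in> {0..1} \<Longrightarrow> z + of_real \<sigma> * d z \<in> K"
    and ds_K: "\<forall>\<^sub>F n in F. \<forall>z\<in>Z. \<forall>\<sigma>\<in>{0..1}. z + of_real \<sigma> * ds n z \<in> K"
  shows "uniform_limit (Z \<times> {0..1}) (\<lambda>n (z, \<sigma>). cs n (z + of_real \<sigma> * ds n z) * ds n z)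
           (\<lambda>(z, \<sigma>). c (z + of_real \<sigma> * d z) * d z) F"
proof -
  define X where "X = Z \<times> {0..1::real}"
  have lim_ds_X: "uniform_limit X (\<lambda>n p. ds n (fst p)) (\<lambda>p. d (fst p)) F"
    by (rule uniform_limit_compose'[OF lim_ds]) (auto simp: X_def)
  have "uniform_limit X (\<lambda>n p. fst p + of_real (snd p) * ds n (fst p)) (\<lambda>p. fst p + of_real (snd p) * d (fst p)) F"
  proof (rule metric_uniform_limit_imp_uniform_limit[OF lim_ds_X], intro always_eventually allI ballI)
    fix n p
    assume "p \<in> X"
    then have "\<bar>snd p\<bar> \<le> 1"
      by (auto simp: X_def)
    then show "dist (fst p + of_real (snd p) * ds n (fst p)) (fst p + of_real (snd p) * d (fst p))
        \<le> dist (ds n (fst p)) (d (fst p))"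
      by (simp add: dist_norm flip: right_diff_distrib) (simp add: norm_mult mult_left_le_one_le)
  qed
  then have "uniform_limit X (\<lambda>n p. cs n (fst p + of_real (snd p) * ds n (fst p)))
      (\<lambda>p. c (fst p + of_real (snd p) * d (fst p))) F"
    using assms by (intro uniform_limit_compose_uniform_limit[OF lim_cs] compact_uniformly_continuous)
      (auto simp: X_def elim!: eventually_mono)
  moreover have "bounded ((\<lambda>p. c (fst p + of_real (snd p) * d (fst p))) ` X)"
  proof (rule bounded_subset)
    show "bounded (c ` K)"
      using assms by (intro compact_imp_bounded compact_continuous_image)
  qed (auto simp: X_def intro!: d_K)
  moreover have "bounded ((\<lambda>p. d (fst p)) ` X)"
    using \<open>bounded (d ` Z)\<close> by (rule bounded_subset) (auto simp: X_def)
  ultimately show ?thesis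
    unfolding X_def split_beta by (intro uniform_lim_mult lim_ds_X[unfolded X_def])
qed

lemma add_scaled_diff_in_closed_segment:
  fixes z w :: complex
  assumes "0 \<le> \<sigma>" "\<sigma> \<le> 1"
  shows "z + of_real \<sigma> * (w - z) \<in> closed_segment z w"
  using assms unfolding in_segment by (intro exI[of _ \<sigma>]) (simp add: scaleR_conv_of_real algebra_simps)

lemma has_integral_contour_integral_initial_segment:
  fixes c :: "complex \<Rightarrow> complex"
  assumes "continuous_on (closed_segment z w) c" "0 \<le> t" "t \<le> 1"
  shows "((\<lambda>s. c (z + of_real (s * t) * (w - z)) * (of_real t * (w - z)))
      has_integral contour_integral (linepath z ((1 - of_real t) * z + of_real t * w)) c) {0..1}"
proof -
  have "closed_segment z ((1 - of_real t) * z + of_real t * w) \<subseteq> closed_segment z w"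
    using add_scaled_diff_in_closed_segment[OF \<open>0 \<le> t\<close> \<open>t \<le> 1\<close>, of z w]
    by (simp add: subset_closed_segment algebra_simps)
  then have "c contour_integrable_on linepath z ((1 - of_real t) * z + of_real t * w)"
    using assms(1) by (intro contour_integrable_continuous_linepath) (rule continuous_on_subset)
  then have "(c has_contour_integral contour_integral (linepath z ((1 - of_real t) * z + of_real t * w)) c)
      (linepath z ((1 - of_real t) * z + of_real t * w))"
    by (rule has_contour_integral_integral)
  moreover have "(\<lambda>s. c (linepath z ((1 - of_real t) * z + of_real t * w) s) * ((1 - of_real t) * z + of_real t * w - z))
      = (\<lambda>s. c (z + of_real (s * t) * (w - z)) * (of_real t * (w - z)))"
    by (simp add: linepath_def scaleR_conv_of_real algebra_simps)
  ultimately show ?thesis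
    by (simp add: has_contour_integral_linepath)
qed

lemma norm_contour_integral_linepaths_diff_le:
  fixes c1 c2 :: "complex \<Rightarrow> complex"
  assumes cont: "continuous_on (closed_segment z w1) c1" "continuous_on (closed_segment z w2) c2"
    and "0 \<le> t" "t \<le> 1"
    and bound: "\<And>\<sigma>. \<sigma> \<in> {0..1} \<Longrightarrow>
      norm (c1 (z + of_real \<sigma> * (w1 - z)) * (w1 - z) - c2 (z + of_real \<sigma> * (w2 - z)) * (w2 - z)) \<le> B"
  shows "norm (contour_integral (linepath z ((1 - of_real t) * z + of_real t * w1)) c1
      - contour_integral (linepath z ((1 - of_real t) * z + of_real t * w2)) c2) \<le> t * B"
proof -
  have diff: "((\<lambda>s. c1 (z + of_real (s * t) * (w1 - z)) * (of_real t * (w1 - z))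
        - c2 (z + of_real (s * t) * (w2 - z)) * (of_real t * (w2 - z)))
      has_integral contour_integral (linepath z ((1 - of_real t) * z + of_real t * w1)) c1
        - contour_integral (linepath z ((1 - of_real t) * z + of_real t * w2)) c2) (cbox 0 1)"
    using has_integral_diff[OF has_integral_contour_integral_initial_segment[OF cont(1) \<open>0 \<le> t\<close> \<open>t \<le> 1\<close>]
        has_integral_contour_integral_initial_segment[OF cont(2) \<open>0 \<le> t\<close> \<open>t \<le> 1\<close>]] by simp
  have "0 \<le> B"
    using order_trans[OF norm_ge_zero bound[of 0]] by simp
  then have "0 \<le> t * B"
    using \<open>0 \<le> t\<close> by simp
  moreover have "norm (c1 (z + of_real (s * t) * (w1 - z)) * (of_real t * (w1 - z))
      - c2 (z + of_real (s * t) * (w2 - z)) * (of_real t * (w2 - z))) \<le> t * B" if "s \<in> cbox 0 1" for s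
  proof -
    have "s * t \<in> {0..1}"
      using that assms by (auto simp: mult_le_one)
    moreover have "c1 (z + of_real (s * t) * (w1 - z)) * (of_real t * (w1 - z))
          - c2 (z + of_real (s * t) * (w2 - z)) * (of_real t * (w2 - z))
        = of_real t * (c1 (z + of_real (s * t) * (w1 - z)) * (w1 - z)
          - c2 (z + of_real (s * t) * (w2 - z)) * (w2 - z))"
      by (simp only: algebra_simps)
    ultimately show ?thesis
      using bound[of "s * t"] \<open>0 \<le> t\<close> by (simp only: norm_mult norm_of_real abs_of_nonneg mult_left_mono)
  qed
  ultimately show ?thesis
    using has_integral_bound[OF _ diff] by simp
qed

lemma eventually_linepath_integrals_close:
  fixes cs :: "nat \<Rightarrow> complex \<Rightarrow> complex" and hs :: "nat \<Rightarrow> complex \<Rightarrow> complex"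
  assumes lim_cs: "uniform_limit K cs c sequentially" and "compact K" "continuous_on K c"
    and cont_cs: "\<forall>\<^sub>F n in sequentially. continuous_on K (cs n)"
    and lim_hs: "uniform_limit Z hs h sequentially" and "bounded ((\<lambda>z. h z - z) ` Z)"
    and seg: "\<forall>z\<in>Z. closed_segment z (h z) \<subseteq> K"
    and seg_n: "\<forall>\<^sub>F n in sequentially. \<forall>z\<in>Z. closed_segment z (hs n z) \<subseteq> K"
    and "\<epsilon> > 0"
  shows "\<forall>\<^sub>F n in sequentially. \<forall>z\<in>Z. \<forall>t\<in>{0..1}.
      norm (contour_integral (linepath z ((1 - of_real t) * z + of_real t * hs n z)) (cs n)
        - contour_integral (linepath z ((1 - of_real t) * z + of_real t * h z)) c) \<le> t * \<epsilon>"
proof -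
  have "uniform_limit (Z \<times> {0..1}) (\<lambda>n (z, \<sigma>). cs n (z + of_real \<sigma> * (hs n z - z)) * (hs n z - z))
      (\<lambda>(z, \<sigma>). c (z + of_real \<sigma> * (h z - z)) * (h z - z)) sequentially"
  proof (rule uniform_limit_segment_integrand[OF lim_cs \<open>compact K\<close> \<open>continuous_on K c\<close>])
    show "uniform_limit Z (\<lambda>n z. hs n z - z) (\<lambda>z. h z - z) sequentially"
      using lim_hs by (intro uniform_limit_intros)
    show "z + of_real \<sigma> * (h z - z) \<in> K" if "z \<in> Z" "\<sigma> \<in> {0..1}" for z \<sigma>
      using add_scaled_diff_in_closed_segment[of \<sigma> z "h z"] seg that by auto
    show "\<forall>\<^sub>F n in sequentially. \<forall>z\<in>Z. \<forall>\<sigma>\<in>{0..1}. z + of_real \<sigma> * (hs n z - z) \<in> K"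
      using seg_n by eventually_elim (use add_scaled_diff_in_closed_segment in fastforce)
  qed fact
  then have "\<forall>\<^sub>F n in sequentially. \<forall>(z, \<sigma>)\<in>Z \<times> {0..1}.
      norm (cs n (z + of_real \<sigma> * (hs n z - z)) * (hs n z - z) - c (z + of_real \<sigma> * (h z - z)) * (h z - z)) < \<epsilon>"
    using uniform_limitD \<open>\<epsilon> > 0\<close> by (fastforce simp: dist_norm elim!: eventually_mono)
  with cont_cs seg_n show ?thesis
  proof eventually_elim
    case (elim n)
    show ?case
    proof (intro ballI)
      fix z :: complex and t :: real
      assume "z \<in> Z" "t \<in> {0..1}"
      then show "norm (contour_integral (linepath z ((1 - of_real t) * z + of_real t * hs n z)) (cs n)
          - contour_integral (linepath z ((1 - of_real t) * z + of_real t * h z)) c) \<le> t * \<epsilon>"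
        using elim seg \<open>continuous_on K c\<close>
        by (intro norm_contour_integral_linepaths_diff_le) (auto intro: less_imp_le continuous_on_subset)
    qed
  qed
qed

lemma closed_segment_subset_annulus:
  fixes z w :: complex
  assumes "norm z = r" "norm (w - z) \<le> r / 2"
  shows "closed_segment z w \<subseteq> cball 0 (3 * r / 2) - ball 0 (r / 2)"
proof
  fix x
  assume "x \<in> closed_segment z w"
  then obtain v where v: "0 \<le> v" "v \<le> 1" and x: "x = z + of_real v * (w - z)"
    by (auto simp: in_segment scaleR_conv_of_real algebra_simps)
  then have "norm (of_real v * (w - z)) \<le> norm (w - z)"
    by (simp only: norm_mult norm_of_real abs_of_nonneg mult_left_le_one_le norm_ge_zero)
  then show "x \<in> cball 0 (3 * r / 2) - ball 0 (r / 2)"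
    using assms x norm_triangle_ineq[of z "of_real v * (w - z)"] norm_triangle_ineq2[of z "- (of_real v * (w - z))"]
    by auto
qed

lemma norm_diff_le_on_cball_if_le_on_sphere:
  assumes "\<exists>S. open S \<and> cball a r \<subseteq> S \<and> f holomorphic_on S"
    and "\<exists>S. open S \<and> cball a r \<subseteq> S \<and> g holomorphic_on S"
    and "\<And>w. w \<in> sphere a r \<Longrightarrow> norm (f w - g w) \<le> B" "z \<in> cball a r"
  shows "norm (f z - g z) \<le> B"
proof -
  obtain S1 S2 where "open S1" "cball a r \<subseteq> S1" "f holomorphic_on S1"
    and "open S2" "cball a r \<subseteq> S2" "g holomorphic_on S2"
    using assms(1,2) by blast
  then have "(\<lambda>w. f w - g w) holomorphic_on cball a r"
    by (intro holomorphic_on_diff) auto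
  then have "(\<lambda>w. f w - g w) holomorphic_on ball a r" "continuous_on (cball a r) (\<lambda>w. f w - g w)"
    using ball_subset_cball by (auto intro: holomorphic_on_imp_continuous_on)
  then show ?thesis
    using maximum_modulus_frontier[of "\<lambda>w. f w - g w" "cball a r"] assms(3,4) by simp
qed

definition buff_factor :: "complex \<Rightarrow> complex" where
  "buff_factor w = (if w = 1 then 1 else (w - 1) / Ln w)"

lemma buff_coef_eq: "buff_coef h z = buff_factor (deriv h z) / (h z - z)"
  by (simp add: buff_coef_def buff_factor_def)

lemma isCont_buff_factor:
  assumes "w \<notin> \<real>\<^sub>\<le>\<^sub>0"
  shows "isCont buff_factor w"
proof (cases "w = 1")
  case True
  have "((\<lambda>y. (Ln y - Ln 1) / (y - 1)) \<longlongrightarrow> 1) (at (1::complex))"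
    using has_field_derivative_Ln[of 1] unfolding has_field_derivative_iff by simp
  then have "((\<lambda>y. inverse ((Ln y - Ln 1) / (y - 1))) \<longlongrightarrow> 1) (at (1::complex))"
    using tendsto_inverse[of _ 1] by fastforce
  moreover have "\<forall>\<^sub>F y in at 1. inverse ((Ln y - Ln 1) / (y - 1)) = buff_factor y"
    by (auto simp: buff_factor_def eventually_at_filter)
  ultimately have "(buff_factor \<longlongrightarrow> 1) (at 1)"
    using tendsto_cong by fastforce
  then show ?thesis
    using True by (simp add: isCont_def buff_factor_def)
next
  case False
  have "isCont (\<lambda>y. (y - 1) / Ln y) w"
    using assms False by (intro continuous_intros) auto
  moreover have "\<forall>\<^sub>F y in nhds w. (y - 1) / Ln y = buff_factor y"
    using eventually_nhds_in_open[of "- {1}" w] False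
    by (auto simp: buff_factor_def elim!: eventually_mono)
  ultimately show ?thesis
    using isCont_cong[of "\<lambda>y. (y - 1) / Ln y" buff_factor w] by blast
qed

lemma continuous_on_buff_factor: "continuous_on (- \<real>\<^sub>\<le>\<^sub>0) buff_factor"
  by (intro continuous_at_imp_continuous_on ballI isCont_buff_factor) auto

lemma continuous_on_buff_coef:
  assumes "continuous_on K h" "continuous_on K (deriv h)"
    and "\<And>w. w \<in> K \<Longrightarrow> h w \<noteq> w" "\<And>w. w \<in> K \<Longrightarrow> deriv h w \<notin> \<real>\<^sub>\<le>\<^sub>0"
  shows "continuous_on K (buff_coef h)"
proof -
  have "continuous_on K (\<lambda>w. buff_factor (deriv h w))"
    by (rule continuous_on_compose2[OF continuous_on_buff_factor assms(2)]) (use assms(4) in auto)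
  then have "continuous_on K (\<lambda>w. buff_factor (deriv h w) / (h w - w))"
    by (intro continuous_intros assms(1)) (use assms(3) in auto)
  then show ?thesis
    by (simp add: buff_coef_eq[abs_def])
qed

lemma uniform_limit_buff_coef:
  fixes Fs :: "'i \<Rightarrow> complex \<Rightarrow> complex"
  assumes "compact K" "continuous_on K F" "continuous_on K (deriv F)"
    and no_fix: "\<And>w. w \<in> K \<Longrightarrow> F w \<noteq> w" and "\<And>w. w \<in> K \<Longrightarrow> deriv F w \<notin> \<real>\<^sub>\<le>\<^sub>0"
    and lim: "uniform_limit K Fs F G" "uniform_limit K (\<lambda>n. deriv (Fs n)) (deriv F) G"
  shows "uniform_limit K (\<lambda>n. buff_coef (Fs n)) (buff_coef F) G"
proof (cases "K = {}")
  case False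
  have "compact (deriv F ` K)"
    using assms by (intro compact_continuous_image)
  then have num: "uniform_limit K (\<lambda>n w. buff_factor (deriv (Fs n) w)) (\<lambda>w. buff_factor (deriv F w)) G"
    using assms by (intro uniform_limit_compose_continuous_on_open[OF lim(2) _ _ _ continuous_on_buff_factor]) auto
  have "continuous_on K (\<lambda>w. buff_factor (deriv F w))"
    using assms by (intro continuous_on_compose2[OF continuous_on_buff_factor]) auto
  then have num_bounded: "bounded ((\<lambda>w. buff_factor (deriv F w)) ` K)"
    using \<open>compact K\<close> by (intro compact_imp_bounded compact_continuous_image)
  have "continuous_on K (\<lambda>w. norm (F w - w))"
    using assms by (intro continuous_intros)
  then obtain x where "x \<in> K" and x: "\<And>w. w \<in> K \<Longrightarrow> norm (F x - x) \<le> norm (F w - w)"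
    using continuous_attains_inf[OF \<open>compact K\<close> False] by blast
  have "uniform_limit K (\<lambda>n w. buff_factor (deriv (Fs n) w) / (Fs n w - w))
      (\<lambda>w. buff_factor (deriv F w) / (F w - w)) G"
    using no_fix[OF \<open>x \<in> K\<close>]
    by (intro uniform_lim_divide[OF num _ num_bounded x] uniform_limit_intros lim(1)) auto
  then show ?thesis
    by (simp add: buff_coef_eq[abs_def])
qed (simp add: uniform_limit_iff)

lemma eventually_continuous_on_buff_coef:
  fixes Fs :: "'i \<Rightarrow> complex \<Rightarrow> complex"
  assumes "compact K" "continuous_on K F" "continuous_on K (deriv F)"
    and "\<And>w. w \<in> K \<Longrightarrow> F w \<noteq> w" "\<And>w. w \<in> K \<Longrightarrow> deriv F w \<notin> \<real>\<^sub>\<le>\<^sub>0"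
    and lim: "uniform_limit K Fs F G" "uniform_limit K (\<lambda>n. deriv (Fs n)) (deriv F) G"
    and cont: "\<forall>\<^sub>F n in G. continuous_on K (Fs n) \<and> continuous_on K (deriv (Fs n))"
  shows "\<forall>\<^sub>F n in G. (\<forall>w\<in>K. Fs n w \<noteq> w) \<and> continuous_on K (buff_coef (Fs n))"
proof -
  have "\<forall>\<^sub>F n in G. \<forall>w\<in>K. Fs n w - w \<in> - {0}"
    using assms by (intro eventually_uniform_limit_in_open[where f = "\<lambda>w. F w - w"]
        uniform_limit_intros compact_continuous_image continuous_intros) auto
  moreover have "\<forall>\<^sub>F n in G. \<forall>w\<in>K. deriv (Fs n) w \<in> - \<real>\<^sub>\<le>\<^sub>0"
    using assms by (intro eventually_uniform_limit_in_open[OF lim(2)] compact_continuous_image) auto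
  ultimately show ?thesis
    using cont by eventually_elim (auto intro: continuous_on_buff_coef)
qed

lemma eventually_buff_int_segments_close:
  fixes F :: "complex \<Rightarrow> complex" and Fs :: "nat \<Rightarrow> complex \<Rightarrow> complex"
  assumes hol_F: "F holomorphic_on ball 0 R" and hol_Fs: "\<And>n. Fs n holomorphic_on ball 0 R"
    and lim: "uniform_limit (ball 0 R) Fs F sequentially"
    and "3 * r / 2 < R"
    and annulus: "\<forall>w\<in>cball 0 (3 * r / 2) - ball 0 (r / 2). F w \<noteq> w \<and> deriv F w \<notin> \<real>\<^sub>\<le>\<^sub>0"
    and small: "\<forall>\<^sub>F n in sequentially. \<forall>z\<in>sphere 0 r. norm (Fs n z - z) \<le> r / 2"
    and "\<epsilon> > 0"
  shows "\<forall>\<^sub>F n in sequentially. \<forall>z\<in>sphere 0 r. Fs n z \<noteq> z \<and> (\<forall>t\<in>{0..1}.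
      norm (buff_int (Fs n) z ((1 - of_real t) * z + of_real t * Fs n z)
        - buff_int F z ((1 - of_real t) * z + of_real t * F z)) \<le> t * \<epsilon>)"
proof -
  define K where "K = cball 0 (3 * r / 2) - ball (0::complex) (r / 2)"
  have "compact K" "K \<subseteq> cball 0 (3 * r / 2)"
    by (auto simp: K_def compact_diff)
  have F_K: "\<And>w. w \<in> K \<Longrightarrow> F w \<noteq> w" "\<And>w. w \<in> K \<Longrightarrow> deriv F w \<notin> \<real>\<^sub>\<le>\<^sub>0"
    using annulus by (auto simp: K_def)
  have K_ball: "K \<subseteq> ball 0 R"
    using \<open>K \<subseteq> cball 0 (3 * r / 2)\<close> \<open>3 * r / 2 < R\<close> by auto
  have cont: "continuous_on K h" "continuous_on K (deriv h)" if "h holomorphic_on ball 0 R" for h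
    using holomorphic_deriv[OF that] that K_ball
    by (meson holomorphic_on_imp_continuous_on holomorphic_on_subset open_ball)+
  have lim_K: "uniform_limit K Fs F sequentially"
    using lim K_ball by (rule uniform_limit_on_subset)
  have lim_deriv_K: "uniform_limit K (\<lambda>n. deriv (Fs n)) (deriv F) sequentially"
    using uniform_limit_deriv_ball[OF lim hol_Fs hol_F \<open>3 * r / 2 < R\<close>] \<open>K \<subseteq> cball 0 (3 * r / 2)\<close>
    by (rule uniform_limit_on_subset)
  have coef_lim: "uniform_limit K (\<lambda>n. buff_coef (Fs n)) (buff_coef F) sequentially"
    using F_K by (intro uniform_limit_buff_coef[OF \<open>compact K\<close> cont[OF hol_F] _ _ lim_K lim_deriv_K])
  have coef_cont: "continuous_on K (buff_coef F)"
    using F_K by (intro continuous_on_buff_coef cont[OF hol_F])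
  have coef_Fs: "\<forall>\<^sub>F n in sequentially. (\<forall>w\<in>K. Fs n w \<noteq> w) \<and> continuous_on K (buff_coef (Fs n))"
    using F_K cont[OF hol_Fs]
    by (intro eventually_continuous_on_buff_coef[OF \<open>compact K\<close> cont[OF hol_F] _ _ lim_K lim_deriv_K]) auto
  have sphere_sub: "sphere (0::complex) r \<subseteq> ball 0 R"
  proof
    fix z :: complex
    assume "z \<in> sphere 0 r"
    then show "z \<in> ball 0 R"
      using \<open>3 * r / 2 < R\<close> norm_ge_zero[of z] by simp
  qed
  have lim_sphere: "uniform_limit (sphere 0 r) Fs F sequentially"
    using lim sphere_sub by (rule uniform_limit_on_subset)
  have F_small: "norm (F z - z) \<le> r / 2" if "z \<in> sphere 0 r" for z
    using norm_diff_le_of_uniform_limit[OF lim_sphere small that] .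
  have segment_K: "closed_segment z w \<subseteq> K" if "z \<in> sphere 0 r" "norm (w - z) \<le> r / 2" for z w
    using closed_segment_subset_annulus[of z r w] that by (simp add: K_def)
  have "\<forall>\<^sub>F n in sequentially. \<forall>z\<in>sphere 0 r. \<forall>t\<in>{0..1}.
      norm (buff_int (Fs n) z ((1 - of_real t) * z + of_real t * Fs n z)
        - buff_int F z ((1 - of_real t) * z + of_real t * F z)) \<le> t * \<epsilon>"
    unfolding buff_int_def
  proof (rule eventually_linepath_integrals_close[OF coef_lim \<open>compact K\<close> coef_cont _ lim_sphere _ _ _ \<open>\<epsilon> > 0\<close>])
    show "\<forall>\<^sub>F n in sequentially. continuous_on K (buff_coef (Fs n))"
      using coef_Fs by (simp add: eventually_conj_iff)
    show "bounded ((\<lambda>z. F z - z) ` sphere 0 r)"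
      using F_small by (intro boundedI[of _ "r / 2"]) auto
    show "\<forall>z\<in>sphere 0 r. closed_segment z (F z) \<subseteq> K"
      using segment_K F_small by blast
    show "\<forall>\<^sub>F n in sequentially. \<forall>z\<in>sphere 0 r. closed_segment z (Fs n z) \<subseteq> K"
      using small by eventually_elim (use segment_K in blast)
  qed
  moreover have "\<forall>\<^sub>F n in sequentially. \<forall>z\<in>sphere 0 r. Fs n z \<noteq> z"
    using coef_Fs small by eventually_elim (use segment_K in fastforce)
  ultimately show ?thesis
    by eventually_elim blast
qed

lemma norm_diff_le_if_buff_ints_close_on_sphere:
  fixes h1 h2 v1 v2 :: "complex \<Rightarrow> complex" and t :: real
  assumes v1: "(\<exists>S. open S \<and> cball 0 r \<subseteq> S \<and> v1 holomorphic_on S) \<and> (\<forall>z\<in>cball 0 r. h1 z \<noteq> z \<longrightarrow>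
      v1 z = - of_real t + buff_int h1 z ((1 - of_real t) * z + of_real t * h1 z))"
    and v2: "(\<exists>S. open S \<and> cball 0 r \<subseteq> S \<and> v2 holomorphic_on S) \<and> (\<forall>z\<in>cball 0 r. h2 z \<noteq> z \<longrightarrow>
      v2 z = - of_real t + buff_int h2 z ((1 - of_real t) * z + of_real t * h2 z))"
    and no_fix: "\<And>w. w \<in> sphere 0 r \<Longrightarrow> h1 w \<noteq> w \<and> h2 w \<noteq> w"
    and close: "\<And>w. w \<in> sphere 0 r \<Longrightarrow> norm (buff_int h1 w ((1 - of_real t) * w + of_real t * h1 w)
      - buff_int h2 w ((1 - of_real t) * w + of_real t * h2 w)) \<le> B"
    and "z \<in> cball 0 r"
  shows "norm (v1 z - v2 z) \<le> B"
proof (rule norm_diff_le_on_cball_if_le_on_sphere[OF conjunct1[OF v1] conjunct1[OF v2] _ \<open>z \<in> cball 0 r\<close>])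
  fix w :: complex
  assume w: "w \<in> sphere 0 r"
  then have "v1 w - v2 w = buff_int h1 w ((1 - of_real t) * w + of_real t * h1 w)
      - buff_int h2 w ((1 - of_real t) * w + of_real t * h2 w)"
    using conjunct2[OF v1] conjunct2[OF v2] no_fix[OF w] by simp
  then show "norm (v1 w - v2 w) \<le> B"
    using close[OF w] by simp
qed

theorem lemma4p2:
  fixes q :: nat and lam b :: complex and g :: "complex \<Rightarrow> complex"
    and U W :: "complex set" and r0 r1 :: real
    and lams :: "nat \<Rightarrow> complex" and gs :: "nat \<Rightarrow> complex \<Rightarrow> complex"
    and Us Ws :: "nat \<Rightarrow> complex set"
    and u :: "real \<Rightarrow> complex \<Rightarrow> complex"
    and us :: "nat \<Rightarrow> real \<Rightarrow> complex \<Rightarrow> complex"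
  assumes q: "q \<ge> 1"
    and lam_root: "lam ^ q = 1" and lam_prim: "\<forall>k. 0 < k \<and> k < q \<longrightarrow> lam ^ k \<noteq> 1"
    and g_hol: "open U" "0 \<in> U" "g holomorphic_on U" "g 0 = 0" "deriv g 0 = lam"
    and f_exp: "\<exists>h \<rho>. \<rho> > 0 \<and> h holomorphic_on ball 0 \<rho> \<and>
        (\<forall>z\<in>ball 0 \<rho>. (g ^^ q) z = z + z ^ (q + 1) + b * z ^ (2 * q + 1) + z ^ (2 * q + 2) * h z)"
    and r0: "0 < r0" "r0 < 1"
    and W: "open W" "cball 0 r0 \<subseteq> W" "\<forall>k<q. (g ^^ k) ` W \<subseteq> U" "inj_on (g ^^ q) W"
    and f_fix: "\<forall>z\<in>cball 0 r0. (g ^^ q) z = z \<longrightarrow> z = 0"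
    and f_re: "\<forall>z\<in>cball 0 r0. Re (deriv (g ^^ q) z) > 0"
    and gs_hol: "\<And>n. open (Us n) \<and> 0 \<in> Us n \<and> gs n holomorphic_on Us n \<and> gs n 0 = 0
        \<and> deriv (gs n) 0 = lams n \<and> norm (lams n) \<noteq> 1"
    and Ws: "\<And>n. open (Ws n) \<and> cball 0 r0 \<subseteq> Ws n \<and> (\<forall>k<q. (gs n ^^ k) ` Ws n \<subseteq> Us n)"
    and conv: "uniform_limit (cball 0 r0) (\<lambda>n. gs n ^^ q) (g ^^ q) sequentially"
    and r1: "0 < r1" "r1 < r0 / 2"
    and r1_f: "inj_on (g ^^ q) (cball 0 r1)" "(g ^^ q) ` cball 0 r1 \<subseteq> ball 0 r0"
    and r1_finv: "cball 0 r1 \<subseteq> (g ^^ q) ` W"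
        "inj_on (inv_into W (g ^^ q)) (cball 0 r1)"
        "inv_into W (g ^^ q) ` cball 0 r1 \<subseteq> ball 0 r0"
    and r1_fs: "\<forall>\<^sub>F n in sequentially. \<forall>z\<in>cball 0 r1. norm ((gs n ^^ q) z - z) \<le> r1 / 2"
    and u_def: "\<And>t. 0 \<le> t \<Longrightarrow> t \<le> 1 \<Longrightarrow>
        (\<exists>S. open S \<and> cball 0 r1 \<subseteq> S \<and> u t holomorphic_on S) \<and>
        (\<forall>z\<in>cball 0 r1. (g ^^ q) z \<noteq> z \<longrightarrow>
           u t z = - of_real t + buff_int (g ^^ q) z ((1 - of_real t) * z + of_real t * (g ^^ q) z))"
    and us_def: "\<forall>\<^sub>F n in sequentially. \<forall>t. 0 \<le> t \<and> t \<le> 1 \<longrightarrow>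
        (\<exists>S. open S \<and> cball 0 r1 \<subseteq> S \<and> us n t holomorphic_on S) \<and>
        (\<forall>z\<in>cball 0 r1. (gs n ^^ q) z \<noteq> z \<longrightarrow>
           us n t z = - of_real t + buff_int (gs n ^^ q) z ((1 - of_real t) * z + of_real t * (gs n ^^ q) z))"
  shows "\<forall>\<epsilon>>0. \<exists>N\<ge>1. \<forall>n\<ge>N. \<forall>z\<in>cball 0 r1. \<forall>t. 0 < t \<and> t \<le> 1 \<longrightarrow>
            norm (us n t z - u t z) < \<epsilon> * t"
proof (intro allI impI)
  fix \<epsilon> :: real
  assume "\<epsilon> > 0"
  have hol_f: "(g ^^ q) holomorphic_on ball 0 r0"
    using holomorphic_on_funpow[OF g_hol(3) W(3)] W(2) by (meson ball_subset_cball holomorphic_on_subset order_trans)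
  have hol_fs: "(gs n ^^ q) holomorphic_on ball 0 r0" for n
    using holomorphic_on_funpow[of "gs n" "Us n" q "Ws n"] gs_hol[of n] Ws[of n]
    by (meson ball_subset_cball holomorphic_on_subset order_trans)
  have annulus: "\<forall>w\<in>cball 0 (3 * r1 / 2) - ball 0 (r1 / 2). (g ^^ q) w \<noteq> w \<and> deriv (g ^^ q) w \<notin> \<real>\<^sub>\<le>\<^sub>0"
  proof
    fix w :: complex
    assume "w \<in> cball 0 (3 * r1 / 2) - ball 0 (r1 / 2)"
    then have "w \<noteq> 0" "w \<in> cball 0 r0"
      using r1 by auto
    then have "(g ^^ q) w \<noteq> w" "Re (deriv (g ^^ q) w) > 0"
      using f_fix f_re by auto
    then show "(g ^^ q) w \<noteq> w \<and> deriv (g ^^ q) w \<notin> \<real>\<^sub>\<le>\<^sub>0"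
      by (auto simp: complex_nonpos_Reals_iff)
  qed
  have "\<forall>\<^sub>F n in sequentially. \<forall>z\<in>sphere 0 r1. (gs n ^^ q) z \<noteq> z \<and> (\<forall>t\<in>{0..1}.
      norm (buff_int (gs n ^^ q) z ((1 - of_real t) * z + of_real t * (gs n ^^ q) z)
        - buff_int (g ^^ q) z ((1 - of_real t) * z + of_real t * (g ^^ q) z)) \<le> t * (\<epsilon> / 2))"
    using conv r1 r1_fs \<open>\<epsilon> > 0\<close>
    by (intro eventually_buff_int_segments_close[OF hol_f hol_fs _ _ annulus])
      (auto elim: uniform_limit_on_subset eventually_mono)
  then have "\<forall>\<^sub>F n in sequentially. \<forall>z\<in>cball 0 r1. \<forall>t. 0 < t \<and> t \<le> 1 \<longrightarrow> norm (us n t z - u t z) < \<epsilon> * t"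
    using us_def
  proof eventually_elim
    case (elim n)
    show ?case
    proof (intro ballI allI impI)
      fix z :: complex and t :: real
      assume "z \<in> cball 0 r1" and t: "0 < t \<and> t \<le> 1"
      have "norm (us n t z - u t z) \<le> t * (\<epsilon> / 2)"
      proof (rule norm_diff_le_if_buff_ints_close_on_sphere[OF elim(2)[rule_format] u_def _ _ \<open>z \<in> cball 0 r1\<close>])
        show "(gs n ^^ q) w \<noteq> w \<and> (g ^^ q) w \<noteq> w" if "w \<in> sphere 0 r1" for w
          using elim(1) annulus r1 that by auto
      qed (use elim(1) t in auto)
      moreover have "t * (\<epsilon> / 2) < \<epsilon> * t"
        using t \<open>\<epsilon> > 0\<close> by simp
      ultimately show "norm (us n t z - u t z) < \<epsilon> * t"
        by linarith
    qed
  qed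
  then obtain N where "\<forall>n\<ge>N. \<forall>z\<in>cball 0 r1. \<forall>t. 0 < t \<and> t \<le> 1 \<longrightarrow> norm (us n t z - u t z) < \<epsilon> * t"
    unfolding eventually_sequentially by blast
  then show "\<exists>N\<ge>1. \<forall>n\<ge>N. \<forall>z\<in>cball 0 r1. \<forall>t. 0 < t \<and> t \<le> 1 \<longrightarrow> norm (us n t z - u t z) < \<epsilon> * t"
    by (intro exI[of _ "Suc N"]) auto
qed

end
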